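(* Let $\mathcal R$ and $\mathcal S$ be TRSs which are equivalent modulo $\mathcal B$ (i.e. $\leftrightarrow^*_{\mathcal R\cup\mathcal B}=\leftrightarrow^*_{\mathcal S\cup\mathcal B}$) and canonical modulo $\mathcal B$. If there is a $\mathcal B$-compatible reduction order $>$ with $\ell>r$ for all rules $\ell\to r\in\mathcal R\cup\mathcal S$, then every rule of $\mathcal R$ has a right-$\mathcal B$-equivalent variant in $\mathcal S$ and vice versa.
   Context: Terms over a signature $\mathcal F$; $\to_{\mathcal R}$ is the usual rewrite relation, $\leftarrow$ its inverse. $\mathcal B$ is a fixed ES with $\mathrm{Var}(\ell)=\mathrm{Var}(r)$ for all $\ell\approx r\in\mathcal B$, $\sim_{\mathcal B}=\leftrightarrow^*_{\mathcal B}$, $\to_{\mathcal R/\mathcal B}=\sim_{\mathcal B}\cdot\to_{\mathcal R}\cdot\sim_{\mathcal B}$. Terminating modulo $\mathcal B$: no infinite $\to_{\mathcal R/\mathcal B}$-sequence; Church–Rosser modulo $\mathcal B$: $\leftrightarrow^*_{\mathcal R\cup\mathcal B}\subseteq\to^*_{\mathcal R}\cdot\sim_{\mathcal B}\cdot\leftarrow^*_{\mathcal R}$; complete modulo $\mathcal B$: both. A TRS is left-reduced if for every rule $\ell\to r$, $\ell$ is a normal form of the TRS without that rule; right-$\mathcal B$-reduced if for every rule $\ell\to r$, $r$ is a normal form of $\to_{\mathcal R/\mathcal B}$; canonical modulo $\mathcal B$ if complete modulo $\mathcal B$, left-reduced and right-$\mathcal B$-reduced. A $\mathcal B$-compatible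 reduction order is a well-founded order on terms closed under contexts and substitutions with $\sim_{\mathcal B}\cdot>\cdot\sim_{\mathcal B}\subseteq>$. Two rules $\ell\to r,\ell'\to r'$ are right-$\mathcal B$-equivalent variants if there is a renaming $\sigma$ with $\ell\sigma=\ell'$ and $r\sigma\sim_{\mathcal B}r'$. *)

theory Defs
  imports Main
begin

datatype ('f, 'v) trm = Var 'v | Fun 'f "('f, 'v) trm list"

fun vars :: "('f, 'v) trm \<Rightarrow> 'v set" where
  "vars (Var x) = {x}"
| "vars (Fun f ts) = (\<Union>t \<in> set ts. vars t)"

fun subst :: "('f, 'v) trm \<Rightarrow> ('v \<Rightarrow> ('f, 'v) trm) \<Rightarrow> ('f, 'v) trm" where
  "subst (Var x) \<sigma> = \<sigma> x"
| "subst (Fun f ts) \<sigma> = Fun f (map (\<lambda>t. subst t \<sigma>) ts)"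

datatype ('f, 'v) ctxt = Hole | More 'f "('f, 'v) trm list" "('f, 'v) ctxt" "('f, 'v) trm list"

primrec ctxt_apply :: "('f, 'v) ctxt \<Rightarrow> ('f, 'v) trm \<Rightarrow> ('f, 'v) trm" where
  "ctxt_apply Hole t = t"
| "ctxt_apply (More f ss C us) t = Fun f (ss @ ctxt_apply C t # us)"

type_synonym ('f, 'v) rule = "('f, 'v) trm \<times> ('f, 'v) trm"

definition renaming :: "('v \<Rightarrow> ('f, 'v) trm) \<Rightarrow> bool" where
  "renaming \<sigma> \<longleftrightarrow> (\<exists>\<pi>. bij \<pi> \<and> \<sigma> = (\<lambda>x. Var (\<pi> x)))"

definition rstep :: "('f, 'v) rule set \<Rightarrow> ('f, 'v) trm rel" where
  "rstep R = {(ctxt_apply C (subst l \<sigma>), ctxt_apply C (subst r \<sigma>)) | C l r \<sigma>. (l, r) \<in> R}"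

definition conv :: "'a rel \<Rightarrow> 'a rel" where
  "conv A = (A \<union> A\<inverse>)\<^sup>*"

definition trs :: "('f, 'v) rule set \<Rightarrow> bool" where
  "trs R \<longleftrightarrow> (\<forall>(l, r) \<in> R. (\<forall>x. l \<noteq> Var x) \<and> vars r \<subseteq> vars l)"

definition var_balanced :: "('f, 'v) rule set \<Rightarrow> bool" where
  "var_balanced B \<longleftrightarrow> (\<forall>(l, r) \<in> B. vars l = vars r)"

definition Beq :: "('f, 'v) rule set \<Rightarrow> ('f, 'v) trm rel" where
  "Beq B = conv (rstep B)"

definition rel_step :: "('f, 'v) rule set \<Rightarrow> ('f, 'v) rule set \<Rightarrow> ('f, 'v) trm rel" where
  "rel_step R B = Beq B O rstep R O Beq B"

definition NF :: "'a rel \<Rightarrow> 'a set" where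
  "NF A = {x. \<not> (\<exists>y. (x, y) \<in> A)}"

definition SN :: "'a rel \<Rightarrow> bool" where
  "SN A \<longleftrightarrow> \<not> (\<exists>f. \<forall>i. (f i, f (Suc i)) \<in> A)"

definition terminating_mod :: "('f, 'v) rule set \<Rightarrow> ('f, 'v) rule set \<Rightarrow> bool" where
  "terminating_mod R B \<longleftrightarrow> SN (rel_step R B)"

definition CR_mod :: "('f, 'v) rule set \<Rightarrow> ('f, 'v) rule set \<Rightarrow> bool" where
  "CR_mod R B \<longleftrightarrow>
     conv (rstep (R \<union> B)) \<subseteq> (rstep R)\<^sup>* O Beq B O ((rstep R)\<inverse>)\<^sup>*"

definition complete_mod :: "('f, 'v) rule set \<Rightarrow> ('f, 'v) rule set \<Rightarrow> bool" where
  "complete_mod R B \<longleftrightarrow> terminating_mod R B \<and> CR_mod R B"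

definition left_reduced :: "('f, 'v) rule set \<Rightarrow> bool" where
  "left_reduced R \<longleftrightarrow> (\<forall>(l, r) \<in> R. l \<in> NF (rstep (R - {(l, r)})))"

definition right_B_reduced :: "('f, 'v) rule set \<Rightarrow> ('f, 'v) rule set \<Rightarrow> bool" where
  "right_B_reduced R B \<longleftrightarrow> (\<forall>(l, r) \<in> R. r \<in> NF (rel_step R B))"

definition canonical_mod :: "('f, 'v) rule set \<Rightarrow> ('f, 'v) rule set \<Rightarrow> bool" where
  "canonical_mod R B \<longleftrightarrow> complete_mod R B \<and> left_reduced R \<and> right_B_reduced R B"

definition equivalent_mod :: "('f, 'v) rule set \<Rightarrow> ('f, 'v) rule set \<Rightarrow> ('f, 'v) rule set \<Rightarrow> bool" where
  "equivalent_mod R S B \<longleftrightarrow> conv (rstep (R \<union> B)) = conv (rstep (S \<union> B))"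

definition B_compatible_reduction_order :: "('f, 'v) rule set \<Rightarrow> ('f, 'v) trm rel \<Rightarrow> bool" where
  "B_compatible_reduction_order B gt \<longleftrightarrow>
     irrefl gt \<and> trans gt \<and> SN gt \<and>
     (\<forall>s t C. (s, t) \<in> gt \<longrightarrow> (ctxt_apply C s, ctxt_apply C t) \<in> gt) \<and>
     (\<forall>s t \<sigma>. (s, t) \<in> gt \<longrightarrow> (subst s \<sigma>, subst t \<sigma>) \<in> gt) \<and>
     Beq B O gt O Beq B \<subseteq> gt"

definition right_B_equiv_variant ::
  "('f, 'v) rule set \<Rightarrow> ('f, 'v) rule \<Rightarrow> ('f, 'v) rule \<Rightarrow> bool" where
  "right_B_equiv_variant B \<rho> \<rho>' \<longleftrightarrow>
     (\<exists>\<sigma>. renaming \<sigma> \<and> subst (fst \<rho>) \<sigma> = fst \<rho>' \<and> (subst (snd \<rho>) \<sigma>, snd \<rho>') \<in> Beq B)"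

end

theory Submission
  imports Defs "HOL-Combinatorics.Transposition"
begin

text \<open>Every left-hand side of R is reducible by S: otherwise \<open>l\<close> and the S-normal
  form \<open>u\<close> of \<open>r\<close> are convertible normal forms, hence \<open>l \<sim>\<^sub>B u\<close> by the Church-Rosser property,
  and \<open>u \<sim>\<^sub>B l > r \<ge> u\<close> contradicts compatibility and irreflexivity of the order. So a rule
  \<open>l \<rightarrow> r\<close> of R has \<open>l = C[l'\<sigma>]\<close> for a rule \<open>l' \<rightarrow> r'\<close> of S, and \<open>l' = D[l''\<tau>]\<close> for a
  rule of R, which by left-reducedness is \<open>l \<rightarrow> r\<close> itself; comparing sizes, both contexts are
  empty and \<open>l'\<close> is a variant \<open>l\<rho>\<close> of \<open>l\<close>. Finally \<open>r\<rho>\<close> and \<open>r'\<close> are convertible and, by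
  right-reducedness, S-normal forms, so again \<open>r\<rho> \<sim>\<^sub>B r'\<close>.\<close>

lemma subst_subst: "subst (subst t \<sigma>) \<tau> = subst t (\<lambda>x. subst (\<sigma> x) \<tau>)"
  by (induction t) auto

lemma subst_Var [simp]: "subst t Var = t"
  by (induction t) (auto intro: map_idI)

lemma subst_cong: "(\<And>x. x \<in> vars t \<Longrightarrow> \<sigma> x = \<tau> x) \<Longrightarrow> subst t \<sigma> = subst t \<tau>"
  by (induction t) auto

lemma finite_vars: "finite (vars t)"
  by (induction t) auto

lemma subst_fixpoint_Var: "subst t \<theta> = t \<Longrightarrow> x \<in> vars t \<Longrightarrow> \<theta> x = Var x"
proof (induction t)
  case (Fun f ts)
  then obtain t where t: "t \<in> set ts" "x \<in> vars t" by auto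
  have "map (\<lambda>t. subst t \<theta>) ts = map id ts" using Fun.prems(1) by simp
  then have "subst t \<theta> = t" using t(1) unfolding map_eq_conv by simp
  then show ?case using Fun.IH t by blast
qed simp

lemma size_trm_pos: "0 < size (t :: ('f, 'v) trm)"
  by (cases t) auto

lemma size_subst: "size t \<le> size (subst t \<sigma>)"
proof (induction t)
  case (Var x)
  show ?case using size_trm_pos[of "\<sigma> x"] by simp
next
  case (Fun f ts)
  then show ?case by (auto intro: size_list_pointwise)
qed

primrec ctxt_subst :: "('f, 'v) ctxt \<Rightarrow> ('v \<Rightarrow> ('f, 'v) trm) \<Rightarrow> ('f, 'v) ctxt" where
  "ctxt_subst Hole \<sigma> = Hole"
| "ctxt_subst (More f ss C us) \<sigma> =
     More f (map (\<lambda>t. subst t \<sigma>) ss) (ctxt_subst C \<sigma>) (map (\<lambda>t. subst t \<sigma>) us)"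

primrec ctxt_comp :: "('f, 'v) ctxt \<Rightarrow> ('f, 'v) ctxt \<Rightarrow> ('f, 'v) ctxt" where
  "ctxt_comp Hole D = D"
| "ctxt_comp (More f ss C us) D = More f ss (ctxt_comp C D) us"

lemma subst_ctxt_apply: "subst (ctxt_apply C t) \<sigma> = ctxt_apply (ctxt_subst C \<sigma>) (subst t \<sigma>)"
  by (induction C) auto

lemma ctxt_apply_ctxt_comp: "ctxt_apply C (ctxt_apply D t) = ctxt_apply (ctxt_comp C D) t"
  by (induction C) auto

lemma ctxt_comp_eq_Hole: "ctxt_comp C D = Hole \<longleftrightarrow> C = Hole \<and> D = Hole"
  by (cases C) auto

lemma ctxt_subst_eq_Hole: "ctxt_subst C \<sigma> = Hole \<longleftrightarrow> C = Hole"
  by (cases C) auto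

lemma size_ctxt_apply: "size t \<le> size (ctxt_apply C t)"
  by (induction C) auto

lemma size_ctxt_apply_less: "C \<noteq> Hole \<Longrightarrow> size t < size (ctxt_apply C t)"
proof (cases C)
  case (More f ss D us)
  then show ?thesis using size_ctxt_apply[of t D] by simp
qed simp

lemma ctxt_apply_subst_self: "ctxt_apply C (subst t \<sigma>) = t \<Longrightarrow> C = Hole"
  using size_ctxt_apply_less[of C "subst t \<sigma>"] size_subst[of t \<sigma>] by fastforce

lemma inj_on_extend_bij:
  fixes f :: "'a \<Rightarrow> 'a"
  assumes "finite A" "inj_on f A"
  shows "\<exists>\<pi>. bij \<pi> \<and> (\<forall>x\<in>A. \<pi> x = f x)"
  using assms
proof (induction A rule: finite_induct)
  case empty
  show ?case by (metis bij_id empty_iff)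
next
  case (insert a A)
  then obtain \<pi> where \<pi>: "bij \<pi>" "\<forall>x\<in>A. \<pi> x = f x" by (auto simp: inj_on_insert)
  show ?case
  proof (intro exI conjI ballI)
    show "bij (transpose (\<pi> a) (f a) \<circ> \<pi>)"
      using \<pi>(1) bij_transpose by (rule bij_comp)
    fix x assume "x \<in> insert a A"
    show "(transpose (\<pi> a) (f a) \<circ> \<pi>) x = f x"
    proof (cases "x = a")
      case False
      with \<open>x \<in> insert a A\<close> have "x \<in> A" by simp
      have "f x \<noteq> f a"
        using inj_onD[OF insert.prems, of x a] \<open>x \<in> A\<close> insert.hyps(2) by auto
      moreover have "f x \<noteq> \<pi> a"
        using injD[OF bij_is_inj[OF \<pi>(1)], of x a] \<pi>(2) \<open>x \<in> A\<close> False by auto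
      ultimately show ?thesis using \<pi>(2) \<open>x \<in> A\<close> by simp
    qed simp
  qed
qed

lemma renaming_inverse: "renaming \<rho> \<Longrightarrow> \<exists>\<rho>'. \<forall>t. subst (subst t \<rho>) \<rho>' = t"
proof -
  assume "renaming \<rho>"
  then obtain \<pi> where "bij \<pi>" and "\<rho> = (\<lambda>x. Var (\<pi> x))" unfolding renaming_def by blast
  then have inv: "(\<lambda>x. subst (\<rho> x) (\<lambda>y. Var (inv \<pi> y))) = Var"
    by (auto simp: bij_is_inj)
  show ?thesis
  proof (intro exI allI)
    fix t
    show "subst (subst t \<rho>) (\<lambda>y. Var (inv \<pi> y)) = t"
      unfolding subst_subst inv by simp
  qed
qed

lemma instance_of_instance_renaming:
  assumes "subst (subst l \<tau>) \<sigma> = l"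
  shows "\<exists>\<rho>. renaming \<rho> \<and> subst l \<rho> = subst l \<tau>"
proof -
  have "\<forall>x\<in>vars l. \<exists>y. \<tau> x = Var y \<and> \<sigma> y = Var x"
  proof
    fix x assume "x \<in> vars l"
    from subst_fixpoint_Var[OF assms[unfolded subst_subst] this]
    show "\<exists>y. \<tau> x = Var y \<and> \<sigma> y = Var x" by (cases "\<tau> x") auto
  qed
  from bchoice[OF this] obtain f where f: "\<forall>x\<in>vars l. \<tau> x = Var (f x) \<and> \<sigma> (f x) = Var x"
    by blast
  have "inj_on f (vars l)"
  proof (rule inj_onI)
    fix x y
    assume "x \<in> vars l" "y \<in> vars l" and fxy: "f x = f y"
    have "Var x = \<sigma> (f x)" using f \<open>x \<in> vars l\<close> by simp
    also have "\<dots> = Var y" using f \<open>y \<in> vars l\<close> fxy by simp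
    finally show "x = y" by simp
  qed
  then obtain \<pi> where \<pi>: "bij \<pi>" "\<forall>x\<in>vars l. \<pi> x = f x"
    using inj_on_extend_bij[OF finite_vars] by blast
  have "subst l (\<lambda>x. Var (\<pi> x)) = subst l \<tau>"
    using f \<pi>(2) by (intro subst_cong) simp
  then show ?thesis using \<pi>(1) unfolding renaming_def by blast
qed

lemma mutual_encompassment_renaming:
  assumes "ctxt_apply C (subst l' \<sigma>) = l" and "ctxt_apply D (subst l \<tau>) = l'"
  shows "\<exists>\<rho>. renaming \<rho> \<and> subst l \<rho> = l'"
proof -
  have "l = ctxt_apply C (subst (ctxt_apply D (subst l \<tau>)) \<sigma>)"
    using assms by (simp only:)
  also have "\<dots> = ctxt_apply (ctxt_comp C (ctxt_subst D \<sigma>)) (subst l (\<lambda>x. subst (\<tau> x) \<sigma>))"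
    by (simp add: subst_ctxt_apply ctxt_apply_ctxt_comp subst_subst)
  finally have "ctxt_apply (ctxt_comp C (ctxt_subst D \<sigma>)) (subst l (\<lambda>x. subst (\<tau> x) \<sigma>)) = l" ..
  then have "C = Hole" "D = Hole"
    using ctxt_apply_subst_self ctxt_comp_eq_Hole ctxt_subst_eq_Hole by blast+
  with assms have "l' = subst l \<tau>" "subst (subst l \<tau>) \<sigma> = l" by simp_all
  then show ?thesis using instance_of_instance_renaming[of l \<tau> \<sigma>] by simp
qed

lemma conv_sym: "(a, b) \<in> conv A \<Longrightarrow> (b, a) \<in> conv A"
  unfolding conv_def by (metis converse_Un converse_converse rtrancl_converseI sup_commute)

lemma conv_trans: "(a, b) \<in> conv A \<Longrightarrow> (b, c) \<in> conv A \<Longrightarrow> (a, c) \<in> conv A"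
  unfolding conv_def by simp

lemma rtrancl_imp_conv: "(a, b) \<in> A\<^sup>* \<Longrightarrow> (a, b) \<in> conv A"
  unfolding conv_def using rtrancl_mono[of A "A \<union> A\<inverse>"] by blast

lemma NF_rtrancl_eq: "x \<in> NF A \<Longrightarrow> (x, y) \<in> A\<^sup>* \<Longrightarrow> y = x"
  unfolding NF_def by (auto elim: converse_rtranclE)

lemma SN_imp_reaches_NF:
  assumes "SN A"
  shows "\<exists>u. (x, u) \<in> A\<^sup>* \<and> u \<in> NF A"
proof -
  have "wf (A\<inverse>)" using assms unfolding SN_def wf_iff_no_infinite_down_chain by simp
  then show ?thesis
  proof (induction x rule: wf_induct_rule)
    case (less x)
    show ?case
    proof (cases "x \<in> NF A")
      case False
      then obtain y where "(x, y) \<in> A" unfolding NF_def by blast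
      with less obtain u where "(y, u) \<in> A\<^sup>*" "u \<in> NF A" by blast
      with \<open>(x, y) \<in> A\<close> show ?thesis by (meson converse_rtrancl_into_rtrancl)
    qed blast
  qed
qed

lemma rstepI:
  "(l, r) \<in> R \<Longrightarrow> s = ctxt_apply C (subst l \<sigma>) \<Longrightarrow> t = ctxt_apply C (subst r \<sigma>) \<Longrightarrow>
   (s, t) \<in> rstep R"
  unfolding rstep_def by blast

lemma rstepE:
  assumes "(s, t) \<in> rstep R"
  obtains C l r \<sigma> where "(l, r) \<in> R" "s = ctxt_apply C (subst l \<sigma>)" "t = ctxt_apply C (subst r \<sigma>)"
  using assms unfolding rstep_def by blast

lemma rule_in_rstep: "(l, r) \<in> R \<Longrightarrow> (l, r) \<in> rstep R"
  by (rule rstepI[where C = Hole and \<sigma> = Var]) simp_all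

lemma rstep_mono: "R \<subseteq> R' \<Longrightarrow> rstep R \<subseteq> rstep R'"
  unfolding rstep_def by blast

lemma rstep_ctxt_subst:
  assumes "(s, t) \<in> rstep R"
  shows "(ctxt_apply C (subst s \<sigma>), ctxt_apply C (subst t \<sigma>)) \<in> rstep R"
  using assms
proof (rule rstepE)
  fix D l r \<tau>
  assume "(l, r) \<in> R" "s = ctxt_apply D (subst l \<tau>)" "t = ctxt_apply D (subst r \<tau>)"
  then show ?thesis
    by (intro rstepI[where C = "ctxt_comp C (ctxt_subst D \<sigma>)" and \<sigma> = "\<lambda>x. subst (\<tau> x) \<sigma>"])
      (simp_all add: subst_ctxt_apply ctxt_apply_ctxt_comp subst_subst)
qed

lemma not_NF_rstepE:
  assumes "s \<notin> NF (rstep R)"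
  obtains C l r \<sigma> where "(l, r) \<in> R" "s = ctxt_apply C (subst l \<sigma>)"
  using assms unfolding NF_def by (blast elim: rstepE)

lemma not_NF_rstep_ctxt_subst:
  "s \<notin> NF (rstep R) \<Longrightarrow> ctxt_apply C (subst s \<sigma>) \<notin> NF (rstep R)"
  unfolding NF_def using rstep_ctxt_subst by blast

lemma NF_rstep_subst_renaming:
  assumes "renaming \<rho>" and "t \<in> NF (rstep R)"
  shows "subst t \<rho> \<in> NF (rstep R)"
proof (rule ccontr)
  obtain \<rho>' where inv: "\<And>u. subst (subst u \<rho>) \<rho>' = u"
    using renaming_inverse[OF assms(1)] by blast
  assume "subst t \<rho> \<notin> NF (rstep R)"
  then have "ctxt_apply Hole (subst (subst t \<rho>) \<rho>') \<notin> NF (rstep R)"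
    by (rule not_NF_rstep_ctxt_subst)
  with assms(2) show False by (simp add: inv)
qed

lemma NF_rstep_subset_if_lhs_reducible:
  assumes "\<forall>(l, r) \<in> S. l \<notin> NF (rstep R)"
  shows "NF (rstep R) \<subseteq> NF (rstep S)"
proof
  fix t assume "t \<in> NF (rstep R)"
  show "t \<in> NF (rstep S)"
  proof (rule ccontr)
    assume "t \<notin> NF (rstep S)"
    then obtain C l r \<sigma> where "(l, r) \<in> S" and t: "t = ctxt_apply C (subst l \<sigma>)"
      by (rule not_NF_rstepE)
    with assms have "l \<notin> NF (rstep R)" by blast
    then have "t \<notin> NF (rstep R)" unfolding t by (rule not_NF_rstep_ctxt_subst)
    with \<open>t \<in> NF (rstep R)\<close> show False by contradiction
  qed
qed

lemma Beq_refl: "(x, x) \<in> Beq B"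
  unfolding Beq_def conv_def by simp

lemma rstep_subset_rel_step: "rstep R \<subseteq> rel_step R B"
  unfolding rel_step_def by (auto intro!: relcompI Beq_refl)

lemma NF_rel_step_imp_NF_rstep: "x \<in> NF (rel_step R B) \<Longrightarrow> x \<in> NF (rstep R)"
  using rstep_subset_rel_step unfolding NF_def by blast

lemma terminating_mod_imp_SN_rstep: "terminating_mod R B \<Longrightarrow> SN (rstep R)"
  using rstep_subset_rel_step[of R B] unfolding terminating_mod_def SN_def by blast

lemma rtrancl_rstep_imp_conv: "(s, t) \<in> (rstep R)\<^sup>* \<Longrightarrow> (s, t) \<in> conv (rstep (R \<union> B))"
  using rtrancl_mono[OF rstep_mono[of R "R \<union> B"]] by (blast intro: rtrancl_imp_conv)

lemma rstep_imp_conv_if_equivalent: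
  "equivalent_mod R S B \<Longrightarrow> (s, t) \<in> rstep R \<Longrightarrow> (s, t) \<in> conv (rstep (S \<union> B))"
  using rtrancl_rstep_imp_conv[of s t R B] unfolding equivalent_mod_def by blast

lemma CR_mod_NF_imp_Beq:
  assumes "CR_mod S B" and "(s, t) \<in> conv (rstep (S \<union> B))"
    and "s \<in> NF (rstep S)" and "t \<in> NF (rstep S)"
  shows "(s, t) \<in> Beq B"
proof -
  from assms(1,2) obtain a b where "(s, a) \<in> (rstep S)\<^sup>*" "(a, b) \<in> Beq B"
    and "(b, t) \<in> ((rstep S)\<inverse>)\<^sup>*"
    unfolding CR_mod_def by blast
  moreover from this(3) have "(t, b) \<in> (rstep S)\<^sup>*" by (simp add: rtrancl_converse)
  ultimately show ?thesis using assms(3,4) NF_rtrancl_eq by metis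
qed

lemma rstep_subset_gt:
  assumes "B_compatible_reduction_order B gt" and "\<forall>(l, r) \<in> S. (l, r) \<in> gt"
  shows "rstep S \<subseteq> gt"
proof
  fix p assume "p \<in> rstep S"
  then obtain C l r \<sigma> where "(l, r) \<in> S" "p = (ctxt_apply C (subst l \<sigma>), ctxt_apply C (subst r \<sigma>))"
    by (metis rstepE surj_pair)
  with assms show "p \<in> gt" unfolding B_compatible_reduction_order_def by auto
qed

lemma lhs_not_NF_if_equivalent:
  assumes eq: "equivalent_mod R S B" and complete: "complete_mod S B"
    and ord: "B_compatible_reduction_order B gt"
    and oriented: "\<forall>(l, r) \<in> R \<union> S. (l, r) \<in> gt" and "(l, r) \<in> R"
  shows "l \<notin> NF (rstep S)"
proof
  assume l_NF: "l \<in> NF (rstep S)"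
  have "SN (rstep S)"
    using complete terminating_mod_imp_SN_rstep unfolding complete_mod_def by blast
  then obtain u where r_u: "(r, u) \<in> (rstep S)\<^sup>*" and u_NF: "u \<in> NF (rstep S)"
    using SN_imp_reaches_NF by metis
  have "(l, r) \<in> conv (rstep (S \<union> B))"
    using rstep_imp_conv_if_equivalent[OF eq rule_in_rstep[OF \<open>(l, r) \<in> R\<close>]] .
  then have "(l, u) \<in> conv (rstep (S \<union> B))"
    by (rule conv_trans[OF _ rtrancl_rstep_imp_conv[OF r_u]])
  moreover have "CR_mod S B" using complete unfolding complete_mod_def by simp
  ultimately have "(l, u) \<in> Beq B" using CR_mod_NF_imp_Beq l_NF u_NF by blast
  then have u_l: "(u, l) \<in> Beq B" unfolding Beq_def by (rule conv_sym)
  have gt_trans: "trans gt" and "irrefl gt" and compat: "Beq B O gt O Beq B \<subseteq> gt"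
    using ord unfolding B_compatible_reduction_order_def by simp_all
  have "rstep S \<subseteq> gt" by (rule rstep_subset_gt[OF ord]) (use oriented in blast)
  then have "(rstep S)\<^sup>* \<subseteq> gt\<^sup>=" by (metis rtrancl_mono rtrancl_trancl_reflcl trancl_id gt_trans)
  with r_u have "(r, u) \<in> gt\<^sup>=" by blast
  moreover have "(l, r) \<in> gt" using oriented \<open>(l, r) \<in> R\<close> by blast
  ultimately have "(l, u) \<in> gt" using transD[OF gt_trans] by blast
  with u_l have "(u, u) \<in> Beq B O gt O Beq B" using Beq_refl by (intro relcompI)
  with compat \<open>irrefl gt\<close> show False unfolding irrefl_def by blast
qed

lemma lhs_variant_if_mutually_reducible:
  assumes "left_reduced R"
    and R_red: "\<forall>(l, r) \<in> R. l \<notin> NF (rstep S)" and S_red: "\<forall>(l, r) \<in> S. l \<notin> NF (rstep R)"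
    and "(l, r) \<in> R"
  shows "\<exists>l' r' \<rho>. (l', r') \<in> S \<and> renaming \<rho> \<and> subst l \<rho> = l'"
proof -
  from R_red \<open>(l, r) \<in> R\<close> have "l \<notin> NF (rstep S)" by blast
  then obtain C l' r' \<sigma> where "(l', r') \<in> S" and l: "l = ctxt_apply C (subst l' \<sigma>)"
    by (rule not_NF_rstepE)
  from S_red \<open>(l', r') \<in> S\<close> have "l' \<notin> NF (rstep R)" by blast
  then obtain D l'' r'' \<tau> where "(l'', r'') \<in> R" and l': "l' = ctxt_apply D (subst l'' \<tau>)"
    by (rule not_NF_rstepE)
  have "(l'', r'') = (l, r)"
  proof (rule ccontr)
    assume "(l'', r'') \<noteq> (l, r)"
    with \<open>(l'', r'') \<in> R\<close> have "(l'', r'') \<in> rstep (R - {(l, r)})" by (intro rule_in_rstep) simp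
    then have "l'' \<notin> NF (rstep (R - {(l, r)}))" unfolding NF_def by blast
    then have "l' \<notin> NF (rstep (R - {(l, r)}))" using l' not_NF_rstep_ctxt_subst by metis
    then have "l \<notin> NF (rstep (R - {(l, r)}))" using l not_NF_rstep_ctxt_subst by metis
    with \<open>left_reduced R\<close> \<open>(l, r) \<in> R\<close> show False unfolding left_reduced_def by blast
  qed
  then have "ctxt_apply D (subst l \<tau>) = l'" using l' by simp
  with l have "\<exists>\<rho>. renaming \<rho> \<and> subst l \<rho> = l'"
    by (intro mutual_encompassment_renaming[of C l' \<sigma>]) simp_all
  with \<open>(l', r') \<in> S\<close> show ?thesis by blast
qed

lemma rule_variant_if_mutually_reducible:
  assumes eq: "equivalent_mod R S B" and "left_reduced R"
    and "right_B_reduced R B" and "right_B_reduced S B" and CR: "CR_mod S B"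
    and R_red: "\<forall>(l, r) \<in> R. l \<notin> NF (rstep S)" and S_red: "\<forall>(l, r) \<in> S. l \<notin> NF (rstep R)"
    and "(l, r) \<in> R"
  shows "\<exists>\<rho>' \<in> S. right_B_equiv_variant B (l, r) \<rho>'"
proof -
  from lhs_variant_if_mutually_reducible[OF \<open>left_reduced R\<close> R_red S_red \<open>(l, r) \<in> R\<close>]
  obtain l' r' \<rho> where "(l', r') \<in> S" "renaming \<rho>" and l': "subst l \<rho> = l'" by blast
  have "r \<in> NF (rel_step R B)"
    using \<open>right_B_reduced R B\<close> \<open>(l, r) \<in> R\<close> unfolding right_B_reduced_def by blast
  then have "subst r \<rho> \<in> NF (rstep R)"
    by (intro NF_rstep_subst_renaming[OF \<open>renaming \<rho>\<close>] NF_rel_step_imp_NF_rstep)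
  then have r\<rho>_NF: "subst r \<rho> \<in> NF (rstep S)"
    using NF_rstep_subset_if_lhs_reducible[OF S_red] by (rule subsetD[rotated])
  have "r' \<in> NF (rel_step S B)"
    using \<open>right_B_reduced S B\<close> \<open>(l', r') \<in> S\<close> unfolding right_B_reduced_def by blast
  then have r'_NF: "r' \<in> NF (rstep S)" by (rule NF_rel_step_imp_NF_rstep)
  have "(l', subst r \<rho>) \<in> rstep R"
    using rstep_ctxt_subst[OF rule_in_rstep[OF \<open>(l, r) \<in> R\<close>], of Hole \<rho>] l' by simp
  then have "(subst r \<rho>, l') \<in> conv (rstep (S \<union> B))"
    by (rule conv_sym[OF rstep_imp_conv_if_equivalent[OF eq]])
  moreover have "(l', r') \<in> conv (rstep (S \<union> B))"
    by (rule rtrancl_rstep_imp_conv[OF r_into_rtrancl[OF rule_in_rstep[OF \<open>(l', r') \<in> S\<close>]]])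
  ultimately have "(subst r \<rho>, r') \<in> Beq B"
    by (rule CR_mod_NF_imp_Beq[OF CR conv_trans r\<rho>_NF r'_NF])
  then have "right_B_equiv_variant B (l, r) (l', r')"
    unfolding right_B_equiv_variant_def using \<open>renaming \<rho>\<close> l' by auto
  with \<open>(l', r') \<in> S\<close> show ?thesis by blast
qed

theorem theorem6p18:
  fixes R S B :: "('f, 'v) rule set" and gt :: "('f, 'v) trm rel"
  assumes "infinite (UNIV :: 'v set)"
    and "var_balanced B"
    and "trs R" and "trs S"
    and "equivalent_mod R S B"
    and "canonical_mod R B" and "canonical_mod S B"
    and "B_compatible_reduction_order B gt"
    and "\<forall>(l, r) \<in> R \<union> S. (l, r) \<in> gt"
  shows "(\<forall>\<rho> \<in> R. \<exists>\<rho>' \<in> S. right_B_equiv_variant B \<rho> \<rho>') \<and>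
         (\<forall>\<rho> \<in> S. \<exists>\<rho>' \<in> R. right_B_equiv_variant B \<rho> \<rho>')"
proof -
  note canR = assms(6)[unfolded canonical_mod_def] and canS = assms(7)[unfolded canonical_mod_def]
  have eq': "equivalent_mod S R B" using assms(5) unfolding equivalent_mod_def by simp
  have oriented': "\<forall>(l, r) \<in> S \<union> R. (l, r) \<in> gt" using assms(9) by (simp add: Un_commute)
  have R_red: "\<forall>(l, r) \<in> R. l \<notin> NF (rstep S)"
    using lhs_not_NF_if_equivalent[OF assms(5) _ assms(8,9)] canS by blast
  have S_red: "\<forall>(l, r) \<in> S. l \<notin> NF (rstep R)"
    using lhs_not_NF_if_equivalent[OF eq' _ assms(8) oriented'] canR by blast
  show ?thesis
  proof (intro conjI ballI)
    fix \<rho> assume "\<rho> \<in> R"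
    then show "\<exists>\<rho>' \<in> S. right_B_equiv_variant B \<rho> \<rho>'"
      using rule_variant_if_mutually_reducible[OF assms(5) _ _ _ _ R_red S_red] canR canS
      unfolding complete_mod_def by (cases \<rho>) simp
  next
    fix \<rho> assume "\<rho> \<in> S"
    then show "\<exists>\<rho>' \<in> R. right_B_equiv_variant B \<rho> \<rho>'"
      using rule_variant_if_mutually_reducible[OF eq' _ _ _ _ S_red R_red] canR canS
      unfolding complete_mod_def by (cases \<rho>) simp
  qed
qed

end
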